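(* Let $\mathcal{H}$ be a complex separable Hilbert space, $A\in\mathcal{B}(\mathcal{H})$ and $\mathcal{G}\subset\mathcal{H}$ a countable Bessel system. Suppose that there is $C>0$ with $\sum_{g\in\mathcal{G}}\int_0^\infty|\langle f,e^{tA}g\rangle|^2dt\le C\|f\|^2$ for all $f\in\mathcal{H}$, and that for some $0<L<\infty$ the system $\{e^{tA}g\}_{g\in\mathcal{G},\,t\in[0,L]}$ is a semi-continuous frame for $\mathcal{H}$. Then $\{e^{tA}\}_{t\ge0}$ is exponentially stable.
   Context: For $A\in\mathcal{B}(\mathcal{H})$, $e^{tA}:=\sum_{n\ge0}\frac{t^n}{n!}A^n$. The semigroup $\{e^{tA}\}_{t\ge0}$ is exponentially stable if there are constants $M\ge1$ and $\omega<0$ with $\|e^{tA}\|\le Me^{\omega t}$ for all $t\ge0$. A countable family $\{f_k\}\subset\mathcal{H}$ is a Bessel system if there is $C>0$ with $\sum_k|\langle f,f_k\rangle|^2\le C\|f\|^2$ for all $f\in\mathcal{H}$. For a countable $\mathcal{G}\subset\mathcal{H}$ and an interval $\mathcal{T}\subset[0,\infty)$, $\{e^{tA}g\}_{g\in\mathcal{G},t\in\mathcal{T}}$ is a semi-continuous frame for $\mathcal{H}$ if there are constants $c,C>0$ such that $c\|f\|^2\le\sum_{g\in\mathcal{G}}\int_{\mathcal{T}}|\langle f,e^{tA}g\rangle|^2\,dt\le C\|f\|^2$ for all $f\in\mathcal{H}$. *)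

theory Defs
  imports "HOL-Analysis.Analysis"
begin

text \<open>The main library only has real inner product spaces, so we
introduce complex Hilbert spaces as real Banach spaces equipped with a complex scalar
multiplication (compatible with the real one) and a complex inner product
(linear in the first argument, conjugate-symmetric) that induces the norm.\<close>

class complex_hilbert = banach +
  fixes scaleC :: "complex \<Rightarrow> 'a \<Rightarrow> 'a"
    and cinner :: "'a \<Rightarrow> 'a \<Rightarrow> complex"
  assumes scaleC_of_real: "scaleC (complex_of_real r) x = scaleR r x"
    and scaleC_add_right: "scaleC a (x + y) = scaleC a x + scaleC a y"
    and scaleC_add_left: "scaleC (a + b) x = scaleC a x + scaleC b x"
    and scaleC_scaleC: "scaleC a (scaleC b x) = scaleC (a * b) x"
    and cinner_commute: "cinner x y = cnj (cinner y x)"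
    and cinner_add_left: "cinner (x + y) z = cinner x z + cinner y z"
    and cinner_scaleC_left: "cinner (scaleC a x) y = a * cinner x y"
    and norm_eq_sqrt_cinner: "norm x = sqrt (Re (cinner x x))"

instantiation complex :: complex_hilbert
begin
definition scaleC_complex :: "complex \<Rightarrow> complex \<Rightarrow> complex" where
  "scaleC_complex a x = a * x"
definition cinner_complex :: "complex \<Rightarrow> complex \<Rightarrow> complex" where
  "cinner_complex x y = x * cnj y"
instance
proof
  fix x y z :: complex and a b :: complex and r :: real
  show "scaleC (complex_of_real r) x = r *\<^sub>R x" by (simp add: scaleC_complex_def scaleR_conv_of_real)
  show "scaleC a (x + y) = scaleC a x + scaleC a y" by (simp add: scaleC_complex_def algebra_simps)
  show "scaleC (a + b) x = scaleC a x + scaleC b x" by (simp add: scaleC_complex_def algebra_simps)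
  show "scaleC a (scaleC b x) = scaleC (a * b) x" by (simp add: scaleC_complex_def)
  show "cinner x y = cnj (cinner y x)" by (simp add: cinner_complex_def)
  show "cinner (x + y) z = cinner x z + cinner y z" by (simp add: cinner_complex_def algebra_simps)
  show "cinner (scaleC a x) y = a * cinner x y" by (simp add: cinner_complex_def scaleC_complex_def)
  show "norm x = sqrt (Re (cinner x x))"
    by (simp add: cinner_complex_def complex_mult_cnj cmod_def power2_eq_square)
qed
end

definition separable_type :: "'a::topological_space itself \<Rightarrow> bool" where
  "separable_type _ \<longleftrightarrow> (\<exists>D::'a set. countable D \<and> closure D = UNIV)"

definition bounded_clinear_op :: "('a::complex_hilbert \<Rightarrow> 'a) \<Rightarrow> bool" where
  "bounded_clinear_op A \<longleftrightarrow> bounded_linear A \<and> (\<forall>c x. A (scaleC c x) = scaleC c (A x))"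

definition op_exp :: "real \<Rightarrow> ('a::real_normed_vector \<Rightarrow> 'a) \<Rightarrow> 'a \<Rightarrow> 'a" where
  "op_exp t A f = (\<Sum>n. (t ^ n / fact n) *\<^sub>R (A ^^ n) f)"

definition exp_stable :: "('a::real_normed_vector \<Rightarrow> 'a) \<Rightarrow> bool" where
  "exp_stable A \<longleftrightarrow> (\<exists>M::real. \<exists>\<omega>::real. M \<ge> 1 \<and> \<omega> < 0 \<and>
      (\<forall>t\<ge>0. onorm (op_exp t A) \<le> M * exp (\<omega> * t)))"

definition bessel_system :: "'a::complex_hilbert set \<Rightarrow> bool" where
  "bessel_system G \<longleftrightarrow> (\<exists>C>0. \<forall>f.
      (\<Sum>\<^sub>\<infinity>g\<in>G. ennreal ((cmod (cinner f g))\<^sup>2)) \<le> ennreal (C * (norm f)\<^sup>2))"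

definition orbit_energy :: "('a::complex_hilbert \<Rightarrow> 'a) \<Rightarrow> 'a set \<Rightarrow> real set \<Rightarrow> 'a \<Rightarrow> ennreal" where
  "orbit_energy A G T f =
     (\<Sum>\<^sub>\<infinity>g\<in>G. \<integral>\<^sup>+ t\<in>T. ennreal ((cmod (cinner f (op_exp t A g)))\<^sup>2) \<partial>lborel)"

definition semi_continuous_frame :: "('a::complex_hilbert \<Rightarrow> 'a) \<Rightarrow> 'a set \<Rightarrow> real set \<Rightarrow> bool" where
  "semi_continuous_frame A G T \<longleftrightarrow> (\<exists>c>0. \<exists>C>0. \<forall>f.
      ennreal (c * (norm f)\<^sup>2) \<le> orbit_energy A G T f \<and>
      orbit_energy A G T f \<le> ennreal (C * (norm f)\<^sup>2))"

end

theory Submission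
  imports Defs
begin

text \<open>Let \<open>B s\<close> be the adjoint of \<open>e\<^sup>s\<^sup>A\<close>. A time shift shows that the orbit energy of \<open>B s f\<close>
  over \<open>[0, L]\<close> is the orbit energy of \<open>f\<close> over \<open>[s, s + L]\<close>. Hence the lower frame bound together
  with the upper bound over \<open>[0, \<infinity>)\<close> gives \<open>\<parallel>B s f\<parallel>\<^sup>2 \<le> K \<parallel>f\<parallel>\<^sup>2\<close> for \<open>K = C / c\<close>, and, summing
  over the disjoint windows \<open>[2kL, 2kL + L]\<close>, \<open>\<Sum>\<^sub>k\<^sub><\<^sub>n \<parallel>B (2kL) f\<parallel>\<^sup>2 \<le> K \<parallel>f\<parallel>\<^sup>2\<close>. As
  \<open>B (2nL) = B (2(n-k)L) \<circ> B (2kL)\<close>, every term of that sum is at least \<open>\<parallel>B (2nL) f\<parallel>\<^sup>2 / K\<close>,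
  so \<open>n \<parallel>B (2nL) f\<parallel>\<^sup>2 \<le> K\<^sup>2 \<parallel>f\<parallel>\<^sup>2\<close>: for large \<open>n\<close> the operator \<open>e\<^sup>2\<^sup>n\<^sup>L\<^sup>A\<close> is a
  contraction by \<open>1/2\<close>, and a uniformly bounded semigroup with such a time is exponentially
  stable. The adjoints come from the Riesz representation theorem, obtained from the point of
  minimal norm on a closed hyperplane.\<close>

section \<open>Complex Hilbert spaces\<close>

lemma cinner_zero_left [simp]: "cinner 0 (y::'a::complex_hilbert) = 0"
  using cinner_add_left[of "0::'a" 0 y] by simp

lemma cinner_zero_right [simp]: "cinner (x::'a::complex_hilbert) 0 = 0"
  by (metis cinner_commute cinner_zero_left complex_cnj_zero)

lemma cinner_add_right: "cinner (x::'a::complex_hilbert) (y + z) = cinner x y + cinner x z"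
  by (metis cinner_add_left cinner_commute complex_cnj_add)

lemma cinner_diff_left: "cinner (x - z) (y::'a::complex_hilbert) = cinner x y - cinner z y"
  by (metis add_diff_cancel cinner_add_left diff_add_cancel)

lemma cinner_scaleC_right: "cinner (x::'a::complex_hilbert) (scaleC a y) = cnj a * cinner x y"
  by (metis cinner_commute cinner_scaleC_left complex_cnj_mult)

lemma cinner_scaleR_left: "cinner (r *\<^sub>R x) (y::'a::complex_hilbert) = of_real r * cinner x y"
  by (metis cinner_scaleC_left scaleC_of_real)

lemma cinner_scaleR_right: "cinner (x::'a::complex_hilbert) (r *\<^sub>R y) = of_real r * cinner x y"
  by (metis cinner_scaleC_right scaleC_of_real complex_cnj_complex_of_real)

lemma Re_cinner_commute: "Re (cinner x y) = Re (cinner y (x::'a::complex_hilbert))"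
  by (metis cinner_commute complex_cnj_cnj cnj.sel(1))

lemma cinner_self: "cinner x (x::'a::complex_hilbert) = of_real ((norm x)\<^sup>2)"
proof (rule complex_eqI)
  have "0 \<le> Re (cinner x x)"
    by (metis norm_ge_zero norm_eq_sqrt_cinner real_sqrt_ge_0_iff)
  then show "Re (cinner x x) = Re (of_real ((norm x)\<^sup>2))"
    by (simp add: norm_eq_sqrt_cinner)
  show "Im (cinner x x) = Im (of_real ((norm x)\<^sup>2))"
    using cinner_commute[of x x] by (metis cnj.sel(2) complex_of_real_def equation_minus_iff
        Im_complex_of_real neg_equal_zero)
qed

lemma Re_cinner_self: "Re (cinner x (x::'a::complex_hilbert)) = (norm x)\<^sup>2"
  by (simp add: cinner_self)

lemma cinner_ext_left:
  assumes "\<And>x. cinner h1 x = cinner h2 (x::'a::complex_hilbert)"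
  shows "h1 = h2"
proof -
  have "cinner (h1 - h2) (h1 - h2) = 0"
    using assms by (simp add: cinner_diff_left)
  then show ?thesis
    by (simp add: cinner_self)
qed

lemma norm_scaleC: "norm (scaleC c (x::'a::complex_hilbert)) = cmod c * norm x"
proof -
  have "cinner (scaleC c x) (scaleC c x) = c * cnj c * cinner x x"
    by (simp add: cinner_scaleC_left cinner_scaleC_right mult.assoc)
  then have "(norm (scaleC c x))\<^sup>2 = Re (c * cnj c * cinner x x)"
    by (metis Re_cinner_self)
  also have "\<dots> = Re (of_real ((cmod c)\<^sup>2) * of_real ((norm x)\<^sup>2))"
    by (simp only: complex_norm_square cinner_self)
  also have "\<dots> = (cmod c * norm x)\<^sup>2"
    by (simp add: power_mult_distrib)
  finally show ?thesis
    by (simp add: power2_eq_iff_nonneg)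
qed

lemma scaleC_scaleR: "scaleC c (r *\<^sub>R (x::'a::complex_hilbert)) = r *\<^sub>R scaleC c x"
  by (metis scaleC_of_real scaleC_scaleC mult.commute)

lemma bounded_linear_scaleC: "bounded_linear (scaleC c :: 'a::complex_hilbert \<Rightarrow> 'a)"
  by (rule bounded_linear_intro[where K="cmod c"])
     (simp_all add: scaleC_add_right scaleC_scaleR norm_scaleC)

lemma norm_add_sq:
  "(norm (x + y))\<^sup>2 = (norm x)\<^sup>2 + 2 * Re (cinner x y) + (norm (y::'a::complex_hilbert))\<^sup>2"
  using Re_cinner_commute[of y x]
  by (simp add: Re_cinner_self[symmetric] cinner_add_left cinner_add_right)

lemma parallelogram_law:
  "(norm (x + y))\<^sup>2 + (norm (x - y))\<^sup>2 = 2 * (norm x)\<^sup>2 + 2 * (norm (y::'a::complex_hilbert))\<^sup>2"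
  using norm_add_sq[of x y] norm_add_sq[of x "- y"]
  by (simp add: cinner_scaleR_right[of x "-1" y, simplified])

lemma linear_coeff_zero_if_quadratic_nonneg:
  fixes a b :: real
  assumes "0 \<le> b" and "\<And>r. 0 \<le> 2 * r * a + r\<^sup>2 * b"
  shows "a = 0"
proof (rule ccontr)
  assume "a \<noteq> 0"
  define r where "r = - a / (b + 1)"
  have "r\<^sup>2 * b = a\<^sup>2 / (b + 1) * (b / (b + 1))"
    using \<open>0 \<le> b\<close> by (simp add: r_def power2_eq_square field_simps)
  also have "\<dots> \<le> a\<^sup>2 / (b + 1)"
    using \<open>0 \<le> b\<close> by (intro mult_left_le) auto
  moreover have "2 * r * a = - 2 * (a\<^sup>2 / (b + 1))"
    by (simp add: r_def power2_eq_square)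
  moreover have "0 < a\<^sup>2 / (b + 1)"
    using \<open>a \<noteq> 0\<close> \<open>0 \<le> b\<close> by simp
  ultimately show False
    using assms(2)[of r] by linarith
qed

lemma Re_cinner_le: "Re (cinner x y) \<le> norm x * norm (y::'a::complex_hilbert)"
proof (cases "y = 0")
  case False
  define r where "r = - Re (cinner x y) / (norm y)\<^sup>2"
  have "0 \<le> (norm (x + r *\<^sub>R y))\<^sup>2"
    by simp
  also have "\<dots> = (norm x)\<^sup>2 + 2 * r * Re (cinner x y) + r\<^sup>2 * (norm y)\<^sup>2"
    by (simp add: norm_add_sq cinner_scaleR_right power_mult_distrib)
  also have "\<dots> = (norm x)\<^sup>2 - (Re (cinner x y))\<^sup>2 / (norm y)\<^sup>2"
    using False by (simp add: r_def field_simps power2_eq_square)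
  finally have "(Re (cinner x y))\<^sup>2 \<le> (norm x * norm y)\<^sup>2"
    using False by (simp add: field_simps power_mult_distrib)
  then show ?thesis
    by (rule power2_le_imp_le) simp
qed simp

lemma cinner_Cauchy_Schwarz: "cmod (cinner x y) \<le> norm x * norm (y::'a::complex_hilbert)"
proof (cases "cinner x y = 0")
  case False
  \<comment> \<open>rotate x by a unit complex number so that the inner product becomes real\<close>
  define u where "u = cnj (cinner x y) / of_real (cmod (cinner x y))"
  have "cmod (cinner x y) = Re (cinner (scaleC u x) y)"
    using False by (simp add: u_def cinner_scaleC_left complex_norm_square[symmetric]
        power2_eq_square field_simps)
  also have "\<dots> \<le> norm x * norm y"
    using Re_cinner_le[of "scaleC u x" y] False by (simp add: norm_scaleC u_def norm_divide)
  finally show ?thesis .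
qed simp

lemma bounded_linear_cinner_left: "bounded_linear (\<lambda>x. cinner (x::'a::complex_hilbert) y)"
  by (rule bounded_linear_intro[where K="norm y"])
     (simp_all add: cinner_add_left cinner_scaleR_left scaleR_conv_of_real cinner_Cauchy_Schwarz)

lemma bounded_linear_cinner_right: "bounded_linear (\<lambda>y. cinner (x::'a::complex_hilbert) y)"
  by (rule bounded_linear_intro[where K="norm x"])
     (simp_all add: cinner_add_right cinner_scaleR_right scaleR_conv_of_real,
      metis cinner_Cauchy_Schwarz mult.commute)

section \<open>Riesz representation and adjoints\<close>

lemma Cauchy_if_norm_minimizing:
  fixes xs :: "nat \<Rightarrow> 'a::complex_hilbert"
  assumes "convex S" and xs: "\<And>n. xs n \<in> S" and d: "\<And>y. y \<in> S \<Longrightarrow> d \<le> norm y"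
    and lim: "(\<lambda>n. norm (xs n)) \<longlonglongrightarrow> d"
  shows "Cauchy xs"
proof (rule metric_CauchyI)
  fix \<epsilon> :: real
  assume "0 < \<epsilon>"
  have "0 \<le> d"
    using lim by (rule LIMSEQ_le_const) simp
  have "(\<lambda>n. (norm (xs n))\<^sup>2) \<longlonglongrightarrow> d\<^sup>2"
    using lim by (rule tendsto_power)
  then have "eventually (\<lambda>n. (norm (xs n))\<^sup>2 < d\<^sup>2 + \<epsilon>\<^sup>2 / 4) sequentially"
    using \<open>0 < \<epsilon>\<close> by (intro order_tendstoD) auto
  then obtain N where N: "\<And>n. N \<le> n \<Longrightarrow> (norm (xs n))\<^sup>2 < d\<^sup>2 + \<epsilon>\<^sup>2 / 4"
    by (auto simp: eventually_sequentially)
  show "\<exists>N. \<forall>m\<ge>N. \<forall>n\<ge>N. dist (xs m) (xs n) < \<epsilon>"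
  proof (intro exI allI impI)
    fix m n
    assume "N \<le> m" "N \<le> n"
    have "(1/2) *\<^sub>R xs m + (1/2) *\<^sub>R xs n \<in> S"
      using \<open>convex S\<close> xs by (intro convexD) auto
    then have "d \<le> norm ((1/2) *\<^sub>R (xs m + xs n))"
      using d by (simp add: scaleR_add_right)
    then have "(2 * d)\<^sup>2 \<le> (norm (xs m + xs n))\<^sup>2"
      using \<open>0 \<le> d\<close> by (intro power_mono) auto
    moreover have "(2 * d)\<^sup>2 = 4 * d\<^sup>2"
      by (simp add: power_mult_distrib)
    ultimately have "(norm (xs m - xs n))\<^sup>2 < \<epsilon>\<^sup>2"
      using parallelogram_law[of "xs m" "xs n"] N[OF \<open>N \<le> m\<close>] N[OF \<open>N \<le> n\<close>] by linarith
    then show "dist (xs m) (xs n) < \<epsilon>"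
      using \<open>0 < \<epsilon>\<close> by (simp add: dist_norm power_less_imp_less_base)
  qed
qed

lemma exists_min_norm_point:
  fixes S :: "'a::complex_hilbert set"
  assumes "closed S" and "convex S" and "S \<noteq> {}"
  shows "\<exists>x\<in>S. \<forall>y\<in>S. norm x \<le> norm y"
proof -
  define d where "d = Inf (norm ` S)"
  have bdd: "bdd_below (norm ` S)"
    by (rule bdd_belowI[of _ 0]) auto
  have d: "d \<le> norm y" if "y \<in> S" for y
    unfolding d_def using bdd that by (intro cInf_lower) auto
  have "d \<in> closure (norm ` S)"
    unfolding d_def using \<open>S \<noteq> {}\<close> bdd by (intro closure_contains_Inf) auto
  then obtain u where u: "\<And>n. u n \<in> norm ` S" and "u \<longlonglongrightarrow> d"
    unfolding closure_sequential by blast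
  then have "\<forall>n. \<exists>x\<in>S. u n = norm x"
    by blast
  then obtain xs where xs: "\<And>n. xs n \<in> S" and u_eq: "\<And>n. u n = norm (xs n)"
    by metis
  have "u = (\<lambda>n. norm (xs n))"
    using u_eq by (rule ext)
  with \<open>u \<longlonglongrightarrow> d\<close> have lim: "(\<lambda>n. norm (xs n)) \<longlonglongrightarrow> d"
    by simp
  have "Cauchy xs"
    using \<open>convex S\<close> xs d lim by (rule Cauchy_if_norm_minimizing)
  then obtain x where x: "xs \<longlonglongrightarrow> x"
    using Cauchy_convergent_iff convergent_def by blast
  have "x \<in> S"
    using \<open>closed S\<close> xs x by (rule closed_sequentially)
  moreover have "norm x = d"
    using LIMSEQ_unique[OF tendsto_norm[OF x] lim] .
  ultimately show ?thesis
    using d by auto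
qed

lemma riesz_representation_Re:
  fixes \<psi> :: "'a::complex_hilbert \<Rightarrow> real"
  assumes "bounded_linear \<psi>"
  shows "\<exists>z. \<forall>x. \<psi> x = Re (cinner x z)"
proof (cases "\<forall>x. \<psi> x = 0")
  case False
  interpret \<psi>: bounded_linear \<psi> by fact
  from False obtain x1 where "\<psi> x1 \<noteq> 0"
    by auto
  then have "x1 /\<^sub>R \<psi> x1 \<in> \<psi> -` {1}"
    by (simp add: \<psi>.scale)
  moreover have "closed (\<psi> -` {1})"
    by (intro continuous_closed_vimage) (simp_all add: \<psi>.isCont)
  moreover have "convex (\<psi> -` {1})"
    by (intro convex_linear_vimage) (simp_all add: \<psi>.linear)
  ultimately obtain x0 where x0: "\<psi> x0 = 1" and min: "\<And>y. \<psi> y = 1 \<Longrightarrow> norm x0 \<le> norm y"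
    using exists_min_norm_point[of "\<psi> -` {1}"] by blast
  have orth: "Re (cinner x0 y) = 0" if "\<psi> y = 0" for y
  proof (rule linear_coeff_zero_if_quadratic_nonneg[where b = "(norm y)\<^sup>2"])
    fix r :: real
    have "(norm x0)\<^sup>2 \<le> (norm (x0 + r *\<^sub>R y))\<^sup>2"
      using min[of "x0 + r *\<^sub>R y"] x0 that by (simp add: \<psi>.add \<psi>.scale power_mono)
    then show "0 \<le> 2 * r * Re (cinner x0 y) + r\<^sup>2 * (norm y)\<^sup>2"
      by (simp add: norm_add_sq cinner_scaleR_right power_mult_distrib)
  qed simp
  have "x0 \<noteq> 0"
    using x0 by auto
  show ?thesis
  proof (intro exI allI)
    fix x
    have "Re (cinner x0 (x - \<psi> x *\<^sub>R x0)) = 0"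
      using x0 by (intro orth) (simp add: \<psi>.diff \<psi>.scale)
    then have "Re (cinner x x0) = \<psi> x * (norm x0)\<^sup>2"
      by (simp add: Re_cinner_commute[of x0] cinner_diff_left cinner_scaleR_left Re_cinner_self)
    then show "\<psi> x = Re (cinner x ((1 / (norm x0)\<^sup>2) *\<^sub>R x0))"
      using \<open>x0 \<noteq> 0\<close> by (simp add: cinner_scaleR_right)
  qed
qed (intro exI[of _ 0], simp)

lemma riesz_representation:
  fixes \<phi> :: "'a::complex_hilbert \<Rightarrow> complex"
  assumes "bounded_linear \<phi>" and "\<And>c x. \<phi> (scaleC c x) = c * \<phi> x"
  shows "\<exists>z. \<forall>x. \<phi> x = cinner x z"
proof -
  have "bounded_linear (\<lambda>x. Re (\<phi> x))"
    using bounded_linear_compose[OF bounded_linear_Re assms(1)] by (simp add: o_def)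
  then obtain z where z: "\<And>x. Re (\<phi> x) = Re (cinner x z)"
    using riesz_representation_Re by blast
  \<comment> \<open>complex linearity recovers the imaginary part from the real part at \<i> x\<close>
  have "Im (\<phi> x) = Im (cinner x z)" for x
    using z[of "scaleC \<i> x"] by (simp add: assms(2) cinner_scaleC_left)
  then show ?thesis
    using z complex_eqI by blast
qed

lemma bounded_clinear_op_adjoint_exists:
  fixes T :: "'a::complex_hilbert \<Rightarrow> 'a"
  assumes "bounded_clinear_op T"
  shows "\<exists>B. \<forall>f x. cinner f (T x) = cinner (B f) x"
proof -
  have "\<exists>h. \<forall>x. cinner f (T x) = cinner h x" for f
  proof -
    obtain h where h: "\<And>x. cinner (T x) f = cinner x h"
      using assms unfolding bounded_clinear_op_def
      by (metis (no_types, lifting) riesz_representation cinner_scaleC_left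
          bounded_linear_compose[OF bounded_linear_cinner_left])
    have "cinner f (T x) = cinner h x" for x
      by (subst (1 2) cinner_commute) (simp add: h)
    then show ?thesis
      by blast
  qed
  then show ?thesis
    by (intro choice allI)
qed

lemma norm_le_if_adjoint_bounded:
  fixes T B :: "'a::complex_hilbert \<Rightarrow> 'a"
  assumes adj: "\<And>f x. cinner f (T x) = cinner (B f) x"
    and "0 \<le> K" and bound: "\<And>y. norm (B y) \<le> K * norm y"
  shows "norm (T x) \<le> K * norm x"
proof (cases "T x = 0")
  case False
  have "(norm (T x))\<^sup>2 = Re (cinner (B (T x)) x)"
    by (simp add: adj[symmetric] Re_cinner_self)
  also have "\<dots> \<le> norm (B (T x)) * norm x"
    by (rule Re_cinner_le)
  also have "\<dots> \<le> K * norm (T x) * norm x"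
    using bound by (intro mult_right_mono) auto
  finally have "norm (T x) * norm (T x) \<le> norm (T x) * (K * norm x)"
    by (simp add: power2_eq_square mult_ac)
  then show ?thesis
    using False by (simp add: mult_le_cancel_left_pos)
qed (use \<open>0 \<le> K\<close> in simp)

section \<open>The operator exponential\<close>

text \<open>A copy of \<open>'a \<Rightarrow>\<^sub>L 'a\<close> with composition as multiplication. The library does not make
  \<open>blinfun\<close> a normed algebra, but Cauchy products of operator series need one.\<close>

typedef (overloaded) 'a bop = "UNIV :: ('a::real_normed_vector \<Rightarrow>\<^sub>L 'a) set"
  morphisms rep_bop abs_bop by simp

setup_lifting type_definition_bop

instantiation bop :: (real_normed_vector) real_normed_algebra
begin
lift_definition zero_bop :: "'a bop" is 0 .
lift_definition plus_bop :: "'a bop \<Rightarrow> 'a bop \<Rightarrow> 'a bop" is "(+)" .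
lift_definition minus_bop :: "'a bop \<Rightarrow> 'a bop \<Rightarrow> 'a bop" is "(-)" .
lift_definition uminus_bop :: "'a bop \<Rightarrow> 'a bop" is "uminus" .
lift_definition scaleR_bop :: "real \<Rightarrow> 'a bop \<Rightarrow> 'a bop" is "scaleR" .
lift_definition norm_bop :: "'a bop \<Rightarrow> real" is norm .
lift_definition times_bop :: "'a bop \<Rightarrow> 'a bop \<Rightarrow> 'a bop" is "blinfun_compose" .
lift_definition sgn_bop :: "'a bop \<Rightarrow> 'a bop" is sgn .
lift_definition dist_bop :: "'a bop \<Rightarrow> 'a bop \<Rightarrow> real" is dist .
definition uniformity_bop :: "('a bop \<times> 'a bop) filter" where
  "uniformity_bop = (INF e\<in>{0<..}. principal {(x, y). dist (rep_bop x) (rep_bop y) < e})"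
definition open_bop :: "'a bop set \<Rightarrow> bool" where
  "open_bop U = (\<forall>x\<in>U. \<forall>\<^sub>F (x', y) in (INF e\<in>{0<..}. principal {(x, y). dist (rep_bop x) (rep_bop y) < e}). x' = x \<longrightarrow> y \<in> U)"
instance
proof
  fix a b c :: "'a bop" and r s :: real
  show "a + b + c = a + (b + c)" by transfer (simp add: add.assoc)
  show "a + b = b + a" by transfer (simp add: add.commute)
  show "0 + a = a" by transfer simp
  show "- a + a = 0" by transfer simp
  show "a - b = a + - b" by transfer simp
  show "r *\<^sub>R (a + b) = r *\<^sub>R a + r *\<^sub>R b" by transfer (simp add: scaleR_add_right)
  show "(r + s) *\<^sub>R a = r *\<^sub>R a + s *\<^sub>R a" by transfer (simp add: scaleR_add_left)
  show "r *\<^sub>R s *\<^sub>R a = (r * s) *\<^sub>R a" by transfer simp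
  show "1 *\<^sub>R a = a" by transfer simp
  show "dist a b = norm (a - b)" by transfer (simp add: dist_norm)
  show "sgn a = inverse (norm a) *\<^sub>R a" by transfer (simp add: sgn_div_norm)
  show "(uniformity :: ('a bop \<times> 'a bop) filter) = (INF e\<in>{0<..}. principal {(x, y). dist x y < e})"
    by (simp add: uniformity_bop_def dist_bop.rep_eq)
  show "(norm a = 0) = (a = 0)" by transfer simp
  show "norm (a + b) \<le> norm a + norm b" by transfer (rule norm_triangle_ineq)
  show "norm (r *\<^sub>R a) = \<bar>r\<bar> * norm a" by transfer simp
  show "a * b * c = a * (b * c)" by transfer (simp add: blinfun_eqI)
  show "(a + b) * c = a * c + b * c"
    by transfer (auto intro!: blinfun_eqI simp: blinfun.bilinear_simps)
  show "a * (b + c) = a * b + a * c"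
    by transfer (auto intro!: blinfun_eqI simp: blinfun.bilinear_simps)
  show "r *\<^sub>R a * b = r *\<^sub>R (a * b)"
    by transfer (auto intro!: blinfun_eqI simp: blinfun.bilinear_simps)
  show "a * r *\<^sub>R b = r *\<^sub>R (a * b)"
    by transfer (auto intro!: blinfun_eqI simp: blinfun.bilinear_simps)
  show "norm (a * b) \<le> norm a * norm b" by transfer (rule norm_blinfun_compose)
next
  fix U :: "'a bop set"
  show "open U = (\<forall>x\<in>U. \<forall>\<^sub>F (x', y) in uniformity. x' = x \<longrightarrow> y \<in> U)"
    by (simp add: open_bop_def uniformity_bop_def)
qed
end

instance bop :: (banach) banach
proof
  fix X :: "nat \<Rightarrow> 'a bop"
  assume "Cauchy X"
  then have "Cauchy (\<lambda>n. rep_bop (X n))"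
    unfolding Cauchy_iff by (simp add: norm_bop.rep_eq minus_bop.rep_eq)
  then obtain L where L: "(\<lambda>n. rep_bop (X n)) \<longlonglongrightarrow> L"
    using Cauchy_convergent_iff convergent_def by blast
  have "X \<longlonglongrightarrow> abs_bop L"
    unfolding LIMSEQ_iff
  proof (intro allI impI)
    fix r :: real
    assume "0 < r"
    with L obtain N where "\<forall>n\<ge>N. norm (rep_bop (X n) - L) < r"
      unfolding LIMSEQ_iff by blast
    then show "\<exists>N. \<forall>n\<ge>N. norm (X n - abs_bop L) < r"
      by (auto simp add: norm_bop.rep_eq minus_bop.rep_eq abs_bop_inverse)
  qed
  then show "convergent X"
    by (rule convergentI)
qed

lemma bounded_linear_rep_bop_apply: "bounded_linear (\<lambda>a::'a::real_normed_vector bop. rep_bop a x)"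
  by (rule bounded_linear_intro[where K="norm x"])
     (simp_all add: plus_bop.rep_eq scaleR_bop.rep_eq blinfun.bilinear_simps norm_bop.rep_eq,
      metis norm_blinfun mult.commute)

lemma bounded_linear_funpow:
  fixes A :: "'a::real_normed_vector \<Rightarrow> 'a"
  assumes "bounded_linear A"
  shows "bounded_linear (A ^^ n)"
proof (induction n)
  case (Suc n)
  show ?case
    using bounded_linear_compose[of A "A ^^ n"] assms Suc.IH by (simp add: o_def)
qed (simp add: id_def bounded_linear_ident)

context
  fixes A :: "'a::complex_hilbert \<Rightarrow> 'a"
  assumes A: "bounded_clinear_op A"
begin

definition op_power :: "nat \<Rightarrow> 'a bop" where
  "op_power n = abs_bop (Blinfun (A ^^ n))"

definition exp_term :: "real \<Rightarrow> nat \<Rightarrow> 'a bop" where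
  "exp_term t n = (t ^ n / fact n) *\<^sub>R op_power n"

lemma rep_op_power: "rep_bop (op_power n) x = (A ^^ n) x"
  by (simp add: op_power_def abs_bop_inverse bounded_linear_Blinfun_apply
      bounded_linear_funpow A[unfolded bounded_clinear_op_def])

lemma rep_exp_term: "rep_bop (exp_term t n) x = (t ^ n / fact n) *\<^sub>R (A ^^ n) x"
  by (simp add: exp_term_def scaleR_bop.rep_eq rep_op_power blinfun.bilinear_simps)

lemma op_power_add: "op_power m * op_power n = op_power (m + n)"
  by (rule rep_bop_inject[THEN iffD1], rule blinfun_eqI)
     (simp add: times_bop.rep_eq rep_op_power funpow_add)

lemma norm_op_power_le: "norm (op_power n) \<le> norm (op_power 1) ^ n"
proof (induction n)
  case 0
  have "norm (op_power 0) = onorm (\<lambda>x::'a. x)"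
    by (simp add: norm_bop.rep_eq norm_blinfun.rep_eq op_power_def abs_bop_inverse
        bounded_linear_Blinfun_apply bounded_linear_ident id_def)
  then show ?case
    using onorm_id_le by simp
next
  case (Suc n)
  have "norm (op_power (Suc n)) \<le> norm (op_power 1) * norm (op_power n)"
    using norm_mult_ineq[of "op_power 1" "op_power n"] by (simp add: op_power_add)
  also have "\<dots> \<le> norm (op_power 1) * norm (op_power 1) ^ n"
    using Suc by (simp add: mult_left_mono)
  finally show ?case
    by simp
qed

lemma summable_norm_exp_term: "summable (\<lambda>n. norm (exp_term t n))"
proof (rule summable_comparison_test'[where N=0])
  show "summable (\<lambda>n. inverse (fact n) * (\<bar>t\<bar> * norm (op_power 1)) ^ n)"
    by (rule summable_exp)
  fix n :: nat
  have "norm (norm (exp_term t n)) = \<bar>t\<bar> ^ n / fact n * norm (op_power n)"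
    by (simp add: exp_term_def power_abs)
  also have "\<dots> \<le> \<bar>t\<bar> ^ n / fact n * norm (op_power 1) ^ n"
    by (intro mult_left_mono norm_op_power_le) auto
  also have "\<dots> = inverse (fact n) * (\<bar>t\<bar> * norm (op_power 1)) ^ n"
    by (simp add: power_mult_distrib field_simps)
  finally show "norm (norm (exp_term t n)) \<le> inverse (fact n) * (\<bar>t\<bar> * norm (op_power 1)) ^ n" .
qed

lemma summable_exp_term: "summable (exp_term t)"
  using summable_norm_exp_term summable_norm_cancel by blast

lemma op_exp_eq_rep_suminf: "op_exp t A x = rep_bop (\<Sum>n. exp_term t n) x"
  by (simp add: bounded_linear.suminf[OF bounded_linear_rep_bop_apply summable_exp_term]
      rep_exp_term op_exp_def)

lemma summable_op_exp_series: "summable (\<lambda>n. (t ^ n / fact n) *\<^sub>R (A ^^ n) x)"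
  using bounded_linear.summable[OF bounded_linear_rep_bop_apply summable_exp_term]
  by (simp add: rep_exp_term)

lemma exp_term_Cauchy_product:
  "(\<Sum>i\<le>k. exp_term s i * exp_term t (k - i)) = exp_term (s + t) k"
proof -
  have "(\<Sum>i\<le>k. exp_term s i * exp_term t (k - i))
      = (\<Sum>i\<le>k. s ^ i / fact i * (t ^ (k - i) / fact (k - i))) *\<^sub>R op_power k"
    by (auto simp: exp_term_def op_power_add mult_ac scaleR_sum_left intro: sum.cong)
  also have "(\<Sum>i\<le>k. s ^ i / fact i * (t ^ (k - i) / fact (k - i))) = (s + t) ^ k / fact k"
    by (simp add: binomial_ring sum_divide_distrib binomial_fact field_simps)
  finally show ?thesis
    by (simp add: exp_term_def)
qed

lemma op_exp_add: "op_exp (s + t) A x = op_exp s A (op_exp t A x)"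
proof -
  have "(\<Sum>n. exp_term s n) * (\<Sum>n. exp_term t n) = (\<Sum>n. exp_term (s + t) n)"
    using Cauchy_product[OF summable_norm_exp_term summable_norm_exp_term]
    by (simp add: exp_term_Cauchy_product)
  moreover have "rep_bop ((\<Sum>n. exp_term s n) * (\<Sum>n. exp_term t n)) x
      = rep_bop (\<Sum>n. exp_term s n) (rep_bop (\<Sum>n. exp_term t n) x)"
    by (simp add: times_bop.rep_eq)
  ultimately show ?thesis
    by (simp add: op_exp_eq_rep_suminf)
qed

lemma bounded_clinear_op_op_exp: "bounded_clinear_op (op_exp t A)"
  unfolding bounded_clinear_op_def
proof (intro conjI allI)
  have "op_exp t A = blinfun_apply (rep_bop (\<Sum>n. exp_term t n))"
    by (simp add: fun_eq_iff op_exp_eq_rep_suminf)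
  then show "bounded_linear (op_exp t A)"
    by (simp add: blinfun.bounded_linear_right)
  fix c x
  have "A (scaleC c y) = scaleC c (A y)" for y
    using A by (simp add: bounded_clinear_op_def)
  then have "(A ^^ n) (scaleC c x) = scaleC c ((A ^^ n) x)" for n
    by (induction n) simp_all
  then have "op_exp t A (scaleC c x) = (\<Sum>n. scaleC c ((t ^ n / fact n) *\<^sub>R (A ^^ n) x))"
    by (simp add: op_exp_def scaleC_scaleR)
  also have "\<dots> = scaleC c (op_exp t A x)"
    unfolding op_exp_def
    by (rule bounded_linear.suminf[OF bounded_linear_scaleC summable_op_exp_series, symmetric])
  finally show "op_exp t A (scaleC c x) = scaleC c (op_exp t A x)" .
qed

lemma op_exp_measurable: "(\<lambda>t. op_exp t A x) \<in> borel_measurable borel"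
proof (rule borel_measurable_LIMSEQ_metric)
  show "(\<lambda>t. \<Sum>n<N. (t ^ n / fact n) *\<^sub>R (A ^^ n) x) \<in> borel_measurable borel" for N
    by (intro borel_measurable_continuous_onI continuous_intros) auto
  show "(\<lambda>N. \<Sum>n<N. (t ^ n / fact n) *\<^sub>R (A ^^ n) x) \<longlonglongrightarrow> op_exp t A x" for t
    unfolding op_exp_def by (rule summable_LIMSEQ[OF summable_op_exp_series])
qed

end

section \<open>Orbit energy and exponential stability\<close>

lemma op_exp_adjoint_semigroup:
  fixes A :: "'a::complex_hilbert \<Rightarrow> 'a"
  assumes "bounded_clinear_op A"
  obtains B where "\<And>s f x. cinner f (op_exp s A x) = cinner (B s f) x"
    and "\<And>a b f. B (a + b) f = B b (B a f)"
proof -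
  have "\<forall>s. \<exists>Bs. \<forall>f x. cinner f (op_exp s A x) = cinner (Bs f) x"
    using bounded_clinear_op_adjoint_exists[OF bounded_clinear_op_op_exp[OF assms]] by blast
  from choice[OF this] obtain B where adj: "\<And>s f x. cinner f (op_exp s A x) = cinner (B s f) x"
    by blast
  moreover have "B (a + b) f = B b (B a f)" for a b f
  proof (rule cinner_ext_left)
    show "cinner (B (a + b) f) x = cinner (B b (B a f)) x" for x
      by (simp add: adj[symmetric] op_exp_add[OF assms])
  qed
  ultimately show ?thesis
    using that by blast
qed

lemma orbit_density_measurable:
  assumes "bounded_clinear_op A"
  shows "(\<lambda>t. ennreal ((cmod (cinner f (op_exp t A g)))\<^sup>2)) \<in> borel_measurable borel"
proof -
  have "(\<lambda>t. cinner f (op_exp t A g)) \<in> borel_measurable borel"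
    using op_exp_measurable[OF assms]
    by (rule measurable_compose[OF _ borel_measurable_continuous_onI])
       (rule linear_continuous_on[OF bounded_linear_cinner_right])
  then show ?thesis
    by measurable
qed

lemma orbit_energy_shift:
  assumes A: "bounded_clinear_op A" and adj: "\<And>x. cinner f (op_exp s A x) = cinner h x"
  shows "orbit_energy A G {0..L} h = orbit_energy A G {s..s + L} f"
  unfolding orbit_energy_def
proof (rule infsum_cong)
  fix g
  let ?\<phi> = "\<lambda>t. ennreal ((cmod (cinner f (op_exp t A g)))\<^sup>2)"
  have [measurable]: "?\<phi> \<in> borel_measurable borel"
    using A by (rule orbit_density_measurable)
  have "(\<integral>\<^sup>+ t\<in>{s..s + L}. ?\<phi> t \<partial>lborel)
      = (\<integral>\<^sup>+ r. ?\<phi> (s + r) * indicator {s..s + L} (s + r) \<partial>lborel)"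
    using nn_integral_real_affine[of "\<lambda>t. ?\<phi> t * indicator {s..s + L} t" 1 s] by simp
  also have "\<dots> = (\<integral>\<^sup>+ r\<in>{0..L}. ennreal ((cmod (cinner h (op_exp r A g)))\<^sup>2) \<partial>lborel)"
    by (intro nn_integral_cong) (simp add: adj[symmetric] op_exp_add[OF A] indicator_def)
  finally show "(\<integral>\<^sup>+ r\<in>{0..L}. ennreal ((cmod (cinner h (op_exp r A g)))\<^sup>2) \<partial>lborel)
      = (\<integral>\<^sup>+ t\<in>{s..s + L}. ?\<phi> t \<partial>lborel)"
    by simp
qed

lemma sum_infsum_ennreal:
  fixes X :: "'i \<Rightarrow> 'b \<Rightarrow> ennreal"
  assumes "finite I"
  shows "(\<Sum>k\<in>I. \<Sum>\<^sub>\<infinity>g\<in>G. X k g) = (\<Sum>\<^sub>\<infinity>g\<in>G. \<Sum>k\<in>I. X k g)"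
  using assms
proof (induction I rule: finite_induct)
  case (insert k I)
  then show ?case
    by (simp add: infsum_add[symmetric] nonneg_summable_on_complete)
qed simp

lemma sum_orbit_energy_le:
  assumes A: "bounded_clinear_op A" and "finite I" and "disjoint_family_on W I"
    and W: "\<And>k. k \<in> I \<Longrightarrow> W k \<in> sets borel" "\<And>k. k \<in> I \<Longrightarrow> W k \<subseteq> T"
  shows "(\<Sum>k\<in>I. orbit_energy A G (W k) f) \<le> orbit_energy A G T f"
proof -
  have "(\<Sum>k\<in>I. \<integral>\<^sup>+ t\<in>W k. \<phi> t \<partial>lborel) \<le> (\<integral>\<^sup>+ t\<in>T. \<phi> t \<partial>lborel)"
    if [measurable]: "\<phi> \<in> borel_measurable borel" for \<phi> :: "real \<Rightarrow> ennreal"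
  proof -
    have "(\<Sum>k\<in>I. \<integral>\<^sup>+ t\<in>W k. \<phi> t \<partial>lborel) = (\<integral>\<^sup>+ t. (\<Sum>k\<in>I. \<phi> t * indicator (W k) t) \<partial>lborel)"
      using W(1) by (intro nn_integral_sum[symmetric]) auto
    also have "\<dots> = (\<integral>\<^sup>+ t\<in>(\<Union>k\<in>I. W k). \<phi> t \<partial>lborel)"
      using assms(2,3) by (simp add: sum_distrib_left[symmetric] indicator_UN_disjoint)
    also have "\<dots> \<le> (\<integral>\<^sup>+ t\<in>T. \<phi> t \<partial>lborel)"
      using W(2) by (intro nn_set_integral_set_mono) auto
    finally show ?thesis .
  qed
  then show ?thesis
    unfolding orbit_energy_def using \<open>finite I\<close> orbit_density_measurable[OF A]
    by (auto simp: sum_infsum_ennreal intro!: infsum_mono nonneg_summable_on_complete)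
qed

lemma disjoint_family_on_windows:
  fixes L :: real
  assumes "0 < L"
  shows "disjoint_family_on (\<lambda>k. {real k * (2 * L) .. real k * (2 * L) + L}) I"
  unfolding disjoint_family_on_def
proof (intro ballI impI)
  fix k k' :: nat
  assume "k \<noteq> k'"
  then have "real k + 1 \<le> real k' \<or> real k' + 1 \<le> real k"
    by linarith
  then have "real k * (2 * L) + L < real k' * (2 * L) \<or> real k' * (2 * L) + L < real k * (2 * L)"
    using assms by (auto simp: algebra_simps dest: mult_right_mono[of _ _ "2 * L"])
  then show "{real k * (2 * L) .. real k * (2 * L) + L} \<inter> {real k' * (2 * L) .. real k' * (2 * L) + L} = {}"
    by auto
qed

lemma sum_sq_norm_adjoint_le:
  assumes A: "bounded_clinear_op A" and "0 < c" and "0 < C"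
    and frame: "\<And>h. ennreal (c * (norm h)\<^sup>2) \<le> orbit_energy A G {0..L} h"
    and upper: "\<And>f. orbit_energy A G {0..} f \<le> ennreal (C * (norm f)\<^sup>2)"
    and adj: "\<And>s f x. cinner f (op_exp s A x) = cinner (B s f) x"
    and "finite I" and "disjoint_family_on (\<lambda>k. {s k .. s k + L}) I" and "\<And>k. k \<in> I \<Longrightarrow> 0 \<le> s k"
  shows "(\<Sum>k\<in>I. (norm (B (s k) f))\<^sup>2) \<le> C / c * (norm f)\<^sup>2"
proof -
  have "ennreal (c * (\<Sum>k\<in>I. (norm (B (s k) f))\<^sup>2)) = (\<Sum>k\<in>I. ennreal (c * (norm (B (s k) f))\<^sup>2))"
    using \<open>0 < c\<close> by (simp add: sum_distrib_left)
  also have "\<dots> \<le> (\<Sum>k\<in>I. orbit_energy A G {s k .. s k + L} f)"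
    using frame orbit_energy_shift[OF A adj] by (intro sum_mono) metis
  also have "\<dots> \<le> orbit_energy A G {0..} f"
    using assms(7-9) by (intro sum_orbit_energy_le[OF A]) auto
  also have "\<dots> \<le> ennreal (C * (norm f)\<^sup>2)"
    by (rule upper)
  finally have "c * (\<Sum>k\<in>I. (norm (B (s k) f))\<^sup>2) \<le> C * (norm f)\<^sup>2"
    using \<open>0 < C\<close> by simp
  then show ?thesis
    using \<open>0 < c\<close> by (simp add: field_simps)
qed

lemma exists_half_contraction_time:
  fixes B :: "real \<Rightarrow> 'a::real_normed_vector \<Rightarrow> 'a"
  assumes "0 < h" and "0 \<le> K"
    and comp: "\<And>a b f. 0 \<le> a \<Longrightarrow> 0 \<le> b \<Longrightarrow> B (a + b) f = B b (B a f)"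
    and bound: "\<And>s f. 0 \<le> s \<Longrightarrow> (norm (B s f))\<^sup>2 \<le> K * (norm f)\<^sup>2"
    and sum_bound: "\<And>n f. (\<Sum>k<n. (norm (B (real k * h) f))\<^sup>2) \<le> K * (norm f)\<^sup>2"
  shows "\<exists>\<tau>>0. \<forall>f. norm (B \<tau> f) \<le> 1/2 * norm f"
proof -
  have decay: "real n * (norm (B (real n * h) f))\<^sup>2 \<le> K\<^sup>2 * (norm f)\<^sup>2" for n f
  proof -
    have "(norm (B (real n * h) f))\<^sup>2 \<le> K * (norm (B (real k * h) f))\<^sup>2" if "k < n" for k
    proof -
      have "real n * h = real k * h + real (n - k) * h"
        using that by (simp add: of_nat_diff algebra_simps)
      then show ?thesis
        using comp[of "real k * h" "real (n - k) * h"] bound \<open>0 < h\<close> by simp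
    qed
    then have "real n * (norm (B (real n * h) f))\<^sup>2 \<le> K * (\<Sum>k<n. (norm (B (real k * h) f))\<^sup>2)"
      using sum_mono[of "{..<n}" "\<lambda>_. (norm (B (real n * h) f))\<^sup>2"] by (simp add: sum_distrib_left)
    also have "\<dots> \<le> K\<^sup>2 * (norm f)\<^sup>2"
      using mult_left_mono[OF sum_bound \<open>0 \<le> K\<close>] by (simp add: power2_eq_square mult.assoc)
    finally show ?thesis .
  qed
  define N where "N = nat \<lceil>4 * K\<^sup>2\<rceil> + 1"
  have N: "4 * K\<^sup>2 \<le> real N" "0 < N"
    unfolding N_def by linarith+
  have "norm (B (real N * h) f) \<le> 1/2 * norm f" for f
  proof -
    have "real N * (4 * (norm (B (real N * h) f))\<^sup>2) = 4 * (real N * (norm (B (real N * h) f))\<^sup>2)"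
      by simp
    also have "\<dots> \<le> 4 * K\<^sup>2 * (norm f)\<^sup>2"
      using decay[of N f] by simp
    also have "\<dots> \<le> real N * (norm f)\<^sup>2"
      using mult_right_mono[OF N(1) zero_le_power2] .
    finally have "4 * (norm (B (real N * h) f))\<^sup>2 \<le> (norm f)\<^sup>2"
      using N(2) by simp
    moreover have "(2 * norm (B (real N * h) f))\<^sup>2 = 4 * (norm (B (real N * h) f))\<^sup>2"
      by (simp add: power_mult_distrib)
    ultimately have "2 * norm (B (real N * h) f) \<le> norm f"
      using power2_le_imp_le[of "2 * norm (B (real N * h) f)" "norm f"] by simp
    then show ?thesis
      by simp
  qed
  then show ?thesis
    using N(2) \<open>0 < h\<close> by (intro exI[of _ "real N * h"]) simp
qed

lemma exp_stable_if_contraction: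
  assumes A: "bounded_clinear_op A" and "0 < \<tau>" and "0 \<le> M"
    and bound: "\<And>s x. 0 \<le> s \<Longrightarrow> norm (op_exp s A x) \<le> M * norm x"
    and half: "\<And>x. norm (op_exp \<tau> A x) \<le> 1/2 * norm x"
  shows "exp_stable A"
proof -
  have iter: "norm (op_exp (real q * \<tau> + r) A x) \<le> M * (1/2) ^ q * norm x" if "0 \<le> r" for q r x
  proof (induction q arbitrary: x)
    case (Suc q)
    have "op_exp (real (Suc q) * \<tau> + r) A x = op_exp \<tau> A (op_exp (real q * \<tau> + r) A x)"
      by (simp add: op_exp_add[OF A, symmetric] algebra_simps)
    also have "norm \<dots> \<le> 1/2 * norm (op_exp (real q * \<tau> + r) A x)"
      by (rule half)
    also have "\<dots> \<le> 1/2 * (M * (1/2) ^ q * norm x)"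
      using Suc.IH by simp
    finally show ?case
      by simp
  qed (simp add: bound that)
  define \<omega> where "\<omega> = - ln 2 / \<tau>"
  have decay: "onorm (op_exp t A) \<le> (2 * M) * exp (\<omega> * t)" if "0 \<le> t" for t
  proof -
    define q where "q = nat \<lfloor>t / \<tau>\<rfloor>"
    have q: "real q \<le> t / \<tau>" "t / \<tau> - 1 \<le> real q"
      using that \<open>0 < \<tau>\<close> by (simp_all add: q_def)
    have r: "0 \<le> t - real q * \<tau>"
      using q(1) \<open>0 < \<tau>\<close> by (simp add: field_simps)
    have "norm (op_exp t A x) \<le> M * (1/2) ^ q * norm x" for x
      using iter[OF r, of q x] by simp
    then have "onorm (op_exp t A) \<le> M * (1/2) ^ q"
      using \<open>0 \<le> M\<close> by (intro onorm_bound) simp_all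
    also have "(1/2::real) ^ q = exp (- real q * ln 2)"
      by (simp add: exp_of_nat_mult exp_minus power_one_over inverse_eq_divide)
    also have "\<dots> \<le> exp (ln 2 + \<omega> * t)"
      using q(2) \<open>0 < \<tau>\<close> mult_left_mono[OF q(2), of "ln 2"] by (simp add: \<omega>_def field_simps)
    also have "\<dots> = 2 * exp (\<omega> * t)"
      by (simp add: exp_add)
    finally show ?thesis
      using \<open>0 \<le> M\<close> by (simp add: mult_left_mono)
  qed
  show ?thesis
    unfolding exp_stable_def
  proof (intro exI conjI allI impI)
    show "\<omega> < 0"
      using \<open>0 < \<tau>\<close> by (simp add: \<omega>_def)
    fix t :: real
    assume "0 \<le> t"
    have "2 * M * exp (\<omega> * t) \<le> max 1 (2 * M) * exp (\<omega> * t)"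
      by (intro mult_right_mono) auto
    then show "onorm (op_exp t A) \<le> max 1 (2 * M) * exp (\<omega> * t)"
      using decay[OF \<open>0 \<le> t\<close>] by linarith
  qed simp
qed

theorem mainTheorem4:
  fixes A :: "'a::complex_hilbert \<Rightarrow> 'a" and G :: "'a set" and L :: real
  assumes "separable_type TYPE('a)"
    and "bounded_clinear_op A"
    and "countable G"
    and "bessel_system G"
    and "\<exists>C>0. \<forall>f. orbit_energy A G {0..} f \<le> ennreal (C * (norm f)\<^sup>2)"
    and "0 < L"
    and "semi_continuous_frame A G {0..L}"
  shows "exp_stable A"
proof -
  note A = \<open>bounded_clinear_op A\<close>
  obtain c where "0 < c" and frame: "\<And>h. ennreal (c * (norm h)\<^sup>2) \<le> orbit_energy A G {0..L} h"
    using assms(7) unfolding semi_continuous_frame_def by blast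
  obtain C where "0 < C" and upper: "\<And>f. orbit_energy A G {0..} f \<le> ennreal (C * (norm f)\<^sup>2)"
    using assms(5) by blast
  obtain B where adj: "\<And>s f x. cinner f (op_exp s A x) = cinner (B s f) x"
    and comp: "\<And>a b f. B (a + b) f = B b (B a f)"
    using op_exp_adjoint_semigroup[OF A] by blast
  note energy = sum_sq_norm_adjoint_le[OF A \<open>0 < c\<close> \<open>0 < C\<close> frame upper adj]
  have bound: "(norm (B s f))\<^sup>2 \<le> C / c * (norm f)\<^sup>2" if "0 \<le> s" for s f
    using energy[of "{0}" "\<lambda>_. s"] that by (simp add: disjoint_family_on_def)
  have "(\<Sum>k<n. (norm (B (real k * (2 * L)) f))\<^sup>2) \<le> C / c * (norm f)\<^sup>2" for n f
    using energy[of "{..<n}"] disjoint_family_on_windows[OF \<open>0 < L\<close>] \<open>0 < L\<close> by simp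
  then obtain \<tau> where "0 < \<tau>" and half: "\<And>f. norm (B \<tau> f) \<le> 1/2 * norm f"
    using exists_half_contraction_time[of "2 * L" "C / c" B] comp bound \<open>0 < L\<close> \<open>0 < c\<close> \<open>0 < C\<close>
    by force
  have "norm (B s f) \<le> sqrt (C / c) * norm f" if "0 \<le> s" for s f
    using real_le_rsqrt[OF bound[OF that, of f]] by (simp only: real_sqrt_mult real_sqrt_abs abs_norm_cancel)
  with adj have "norm (op_exp s A x) \<le> sqrt (C / c) * norm x" if "0 \<le> s" for s x
    using that \<open>0 < c\<close> \<open>0 < C\<close> by (intro norm_le_if_adjoint_bounded) auto
  moreover have "norm (op_exp \<tau> A x) \<le> 1/2 * norm x" for x
    using adj half by (intro norm_le_if_adjoint_bounded) auto
  ultimately show ?thesis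
    using A \<open>0 < \<tau>\<close> \<open>0 < c\<close> \<open>0 < C\<close>
    by (intro exp_stable_if_contraction[where M = "sqrt (C / c)"]) auto
qed

end
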